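(* Suppose that for each $k=1,\dots,K$ the Markov kernel $p_k$ on $\Theta$ is $\mu_k$-reversible. For $\sigma\in S_K$ define the swapped kernel $\mathbf p_\sigma(\boldsymbol\theta,\cdot)=p_{\sigma(1)}(\theta_1,\cdot)\times\dots\times p_{\sigma(K)}(\theta_K,\cdot)$, the swapped density $\boldsymbol\pi_\sigma(\boldsymbol\theta)=\prod_{k=1}^K\pi_{\sigma(k)}(\theta_k)$, and the weights $w_\sigma(\boldsymbol\theta)=\boldsymbol\pi_\sigma(\boldsymbol\theta)/\sum_{\sigma'\in S_K}\boldsymbol\pi_{\sigma'}(\boldsymbol\theta)$. Let the Weighted Generalized Parallel Tempering kernel be $\mathbf p^{(\mathrm W)}(\boldsymbol\theta,\cdot)=\sum_{\sigma\in S_K}w_\sigma(\boldsymbol\theta)\mathbf p_\sigma(\boldsymbol\theta,\cdot)$, and let $\boldsymbol\mu_{\mathrm W}=\frac{1}{|S_K|}\sum_{\sigma\in S_K}\boldsymbol\mu_\sigma$, where $\boldsymbol\mu_\sigma=\mu_{\sigma(1)}\times\dots\times\mu_{\sigma(K)}$; equivalently $\boldsymbol\mu_{\mathrm W}$ has $\boldsymbol\mu_{\mathrm{pr}}$-density $\boldsymbol\pi_{\mathrm W}=\frac{1}{|S_K|}\sum_{\sigma\in S_K}\boldsymbol\pi_\sigma$. Then the Markov chain generated by $\mathbf p^{(\mathrm W)}$ is $\boldsymbol\mu_{\mathrm W}$-reversible.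
   Context: Let $\Theta$ be a separable Banach space with Borel $\sigma$-algebra, $\mu_{\mathrm{pr}}$ a probability measure on $\Theta$, and $\Phi:\Theta\to\mathbb R$ a measurable potential. Fix $K\ge1$ and temperatures $1=T_1<\dots<T_K\le\infty$; $\mu_k$ is the probability measure with $\mu_{\mathrm{pr}}$-density $\pi_k(\theta)=e^{-\Phi(\theta)/T_k}/Z_k$, $Z_k=\int_\Theta e^{-\Phi/T_k}d\mu_{\mathrm{pr}}$ ($\mu_K=\mu_{\mathrm{pr}}$ if $T_K=\infty$). $\Theta^K$ carries the product $\sigma$-algebra, $\boldsymbol\mu_{\mathrm{pr}}=\mu_{\mathrm{pr}}^{\times K}$, and $S_K$ is a set of permutations of $\{1,\dots,K\}$ closed under inversion. A kernel $p$ is $\nu$-reversible if $\int_B p(\theta,A)\nu(d\theta)=\int_A p(\theta,B)\nu(d\theta)$ for all measurable $A,B$. *)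

theory Defs
  imports "HOL-Probability.Probability" "HOL-Combinatorics.Permutations"
begin

text \<open>The state space \<Theta> is a separable Banach space, i.e. a type of class
  banach + second_countable_topology, equipped with its Borel sigma-algebra.
  Indices run over {1..K}; a point of \<Theta>^K is a function nat => 'a,
  and \<Theta>^K carries the product sigma-algebra PiM {1..K} (\<lambda>_. borel).\<close>

definition markov_kernel :: "'b measure \<Rightarrow> ('b \<Rightarrow> 'b measure) \<Rightarrow> bool" where
  "markov_kernel M p \<longleftrightarrow> p \<in> M \<rightarrow>\<^sub>M prob_algebra M"

definition reversible :: "'b measure \<Rightarrow> ('b \<Rightarrow> 'b measure) \<Rightarrow> bool" where
  "reversible \<nu> p \<longleftrightarrow>
     (\<forall>A\<in>sets \<nu>. \<forall>B\<in>sets \<nu>.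
        (\<integral>\<^sup>+\<theta>\<in>B. emeasure (p \<theta>) A \<partial>\<nu>) = (\<integral>\<^sup>+\<theta>\<in>A. emeasure (p \<theta>) B \<partial>\<nu>))"

definition inv_temp :: "ereal \<Rightarrow> real" where
  "inv_temp T = (if T = \<infinity> then 0 else 1 / real_of_ereal T)"

definition Zc :: "'a measure \<Rightarrow> ('a \<Rightarrow> real) \<Rightarrow> ereal \<Rightarrow> real" where
  "Zc \<mu>pr \<Phi> T = (\<integral>\<theta>. exp (- \<Phi> \<theta> * inv_temp T) \<partial>\<mu>pr)"

definition tdens :: "'a measure \<Rightarrow> ('a \<Rightarrow> real) \<Rightarrow> ereal \<Rightarrow> 'a \<Rightarrow> real" where
  "tdens \<mu>pr \<Phi> T \<theta> = exp (- \<Phi> \<theta> * inv_temp T) / Zc \<mu>pr \<Phi> T"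

definition tmeasure :: "'a measure \<Rightarrow> ('a \<Rightarrow> real) \<Rightarrow> ereal \<Rightarrow> 'a measure" where
  "tmeasure \<mu>pr \<Phi> T = density \<mu>pr (\<lambda>\<theta>. ennreal (tdens \<mu>pr \<Phi> T \<theta>))"

definition swap_dens ::
  "nat \<Rightarrow> (nat \<Rightarrow> 'a \<Rightarrow> real) \<Rightarrow> (nat \<Rightarrow> nat) \<Rightarrow> (nat \<Rightarrow> 'a) \<Rightarrow> real" where
  "swap_dens K \<pi> \<sigma> \<theta> = (\<Prod>k\<in>{1..K}. \<pi> (\<sigma> k) (\<theta> k))"

definition swap_weight ::
  "nat \<Rightarrow> (nat \<Rightarrow> nat) set \<Rightarrow> (nat \<Rightarrow> 'a \<Rightarrow> real) \<Rightarrow> (nat \<Rightarrow> nat) \<Rightarrow> (nat \<Rightarrow> 'a) \<Rightarrow> real" where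
  "swap_weight K S \<pi> \<sigma> \<theta> = swap_dens K \<pi> \<sigma> \<theta> / (\<Sum>\<sigma>'\<in>S. swap_dens K \<pi> \<sigma>' \<theta>)"

definition swap_kernel ::
  "nat \<Rightarrow> (nat \<Rightarrow> 'a \<Rightarrow> 'a measure) \<Rightarrow> (nat \<Rightarrow> nat) \<Rightarrow> (nat \<Rightarrow> 'a) \<Rightarrow> (nat \<Rightarrow> 'a) measure" where
  "swap_kernel K p \<sigma> \<theta> = PiM {1..K} (\<lambda>k. p (\<sigma> k) (\<theta> k))"

definition wgpt_kernel ::
  "nat \<Rightarrow> (nat \<Rightarrow> nat) set \<Rightarrow> (nat \<Rightarrow> 'a::topological_space \<Rightarrow> real) \<Rightarrow> (nat \<Rightarrow> 'a \<Rightarrow> 'a measure)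
     \<Rightarrow> (nat \<Rightarrow> 'a) \<Rightarrow> (nat \<Rightarrow> 'a) measure" where
  "wgpt_kernel K S \<pi> p \<theta> =
     measure_of (space (PiM {1..K} (\<lambda>_. (borel :: 'a measure)))) (sets (PiM {1..K} (\<lambda>_. (borel :: 'a measure))))
       (\<lambda>A. \<Sum>\<sigma>\<in>S. ennreal (swap_weight K S \<pi> \<sigma> \<theta>) * emeasure (swap_kernel K p \<sigma> \<theta>) A)"

definition mu_W ::
  "nat \<Rightarrow> (nat \<Rightarrow> nat) set \<Rightarrow> 'a measure \<Rightarrow> (nat \<Rightarrow> 'a \<Rightarrow> real) \<Rightarrow> (nat \<Rightarrow> 'a) measure" where
  "mu_W K S \<mu>pr \<pi> = density (PiM {1..K} (\<lambda>_. \<mu>pr))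
      (\<lambda>\<theta>. ennreal ((1 / real (card S)) * (\<Sum>\<sigma>\<in>S. swap_dens K \<pi> \<sigma> \<theta>)))"

end

theory Submission
  imports Defs
begin

text \<open>Each swapped kernel \<open>p\<^sub>\<sigma>\<close> is a product of kernels \<open>p\<^sub>j\<close> that are reversible
  with respect to the tempered measures \<open>\<mu>\<^sub>j\<close>, hence reversible with respect to the product
  measure \<open>\<mu>\<^sub>\<sigma>\<close>: on measurable rectangles the probability flow factorises into the flows
  of the factors, and a Dynkin argument extends the symmetry of the flow from rectangles to
  all measurable sets. Since \<open>w\<^sub>\<sigma> \<pi>\<^sub>W = \<pi>\<^sub>\<sigma> / |S|\<close>, the flow of the weighted kernel under
  \<open>\<mu>\<^sub>W\<close> is the average over \<open>\<sigma>\<close> of the flows of \<open>p\<^sub>\<sigma>\<close> under \<open>\<mu>\<^sub>\<sigma>\<close>, each of which is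
  symmetric.\<close>

definition kernel_flow :: "'b measure \<Rightarrow> ('b \<Rightarrow> 'b measure) \<Rightarrow> 'b set \<Rightarrow> 'b set \<Rightarrow> ennreal" where
  "kernel_flow \<nu> p A B = (\<integral>\<^sup>+\<theta>\<in>A. emeasure (p \<theta>) B \<partial>\<nu>)"

lemma reversible_iff_kernel_flow:
  "reversible \<nu> p \<longleftrightarrow> (\<forall>A\<in>sets \<nu>. \<forall>B\<in>sets \<nu>. kernel_flow \<nu> p A B = kernel_flow \<nu> p B A)"
  unfolding reversible_def kernel_flow_def by metis

lemma kernel_flow_sym_generator:
  assumes "finite_measure \<nu>" and Q: "Q \<in> \<nu> \<rightarrow>\<^sub>M subprob_algebra \<nu>"
    and G: "Int_stable G" "G \<subseteq> Pow (space \<nu>)" "sets \<nu> = sigma_sets (space \<nu>) G" "space \<nu> \<in> G"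
    and B: "B \<in> sets \<nu>"
    and eq: "\<And>A. A \<in> G \<Longrightarrow> kernel_flow \<nu> Q A B = kernel_flow \<nu> Q B A"
    and A: "A \<in> sets \<nu>"
  shows "kernel_flow \<nu> Q A B = kernel_flow \<nu> Q B A"
proof (cases "space \<nu> = {}")
  case True
  then show ?thesis
    using sets.sets_into_space[OF A] sets.sets_into_space[OF B] by (simp add: kernel_flow_def)
next
  case False
  interpret finite_measure \<nu> by fact
  note [measurable] = measurable_emeasure_kernel[OF Q B]
  have Q': "Q \<in> density \<nu> (indicator B) \<rightarrow>\<^sub>M subprob_algebra \<nu>"
    using Q by simp
  \<comment> \<open>As functions of \<open>X\<close>, the flows from \<open>B\<close> into \<open>X\<close> and from \<open>X\<close> into \<open>B\<close> are finite
    measures; they agree on the generator.\<close>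
  define into_B where "into_B = density \<nu> (indicator B) \<bind> Q"
  define from_B where "from_B = density \<nu> (\<lambda>\<theta>. emeasure (Q \<theta>) B)"
  have into_B: "emeasure into_B X = kernel_flow \<nu> Q B X" if X: "X \<in> sets \<nu>" for X
  proof -
    note [measurable] = measurable_emeasure_kernel[OF Q X]
    have "emeasure into_B X = (\<integral>\<^sup>+\<theta>. emeasure (Q \<theta>) X \<partial>density \<nu> (indicator B))"
      unfolding into_B_def using False by (intro emeasure_bind[OF _ Q' X]) simp
    also have "\<dots> = kernel_flow \<nu> Q B X"
      using B by (subst nn_integral_density) (auto simp: kernel_flow_def mult.commute)
    finally show ?thesis .
  qed
  have from_B: "emeasure from_B X = kernel_flow \<nu> Q X B" if "X \<in> sets \<nu>" for X
    using that unfolding from_B_def kernel_flow_def by (simp add: emeasure_density)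
  have "kernel_flow \<nu> Q B (space \<nu>) \<le> emeasure \<nu> (space \<nu>)"
    unfolding kernel_flow_def
    by (rule order_trans[OF nn_integral_mono nn_integral_indicator[OF sets.top, THEN eq_refl]])
       (auto simp: subprob_space.subprob_emeasure_le_1[OF subprob_space_kernel[OF Q]] split: split_indicator)
  then have fin: "emeasure into_B (space \<nu>) \<noteq> \<infinity>"
    using emeasure_finite[of "space \<nu>"] by (auto simp: into_B top_unique)
  have "into_B = from_B"
  proof (rule measure_eqI_generator_eq[OF G(1,2), where A="\<lambda>_. space \<nu>"])
    have "sets into_B = sets \<nu>"
      unfolding into_B_def using False by (intro sets_bind sets_kernel[OF Q']) simp_all
    then show "sets into_B = sigma_sets (space \<nu>) G"
      using G(3) by simp
  qed (use G eq fin into_B from_B sigma_sets.Basic in \<open>auto simp: from_B_def\<close>)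
  then show ?thesis
    using into_B[OF A] from_B[OF A] by simp
qed

lemma reversibleI_generator:
  assumes "finite_measure \<nu>" and "Q \<in> \<nu> \<rightarrow>\<^sub>M subprob_algebra \<nu>"
    and G: "Int_stable G" "G \<subseteq> Pow (space \<nu>)" "sets \<nu> = sigma_sets (space \<nu>) G" "space \<nu> \<in> G"
    and eq: "\<And>A B. A \<in> G \<Longrightarrow> B \<in> G \<Longrightarrow> kernel_flow \<nu> Q A B = kernel_flow \<nu> Q B A"
  shows "reversible \<nu> Q"
  unfolding reversible_iff_kernel_flow
proof (intro ballI)
  fix A B assume A: "A \<in> sets \<nu>" and B: "B \<in> sets \<nu>"
  have G_sets: "X \<in> G \<Longrightarrow> X \<in> sets \<nu>" for X
    using G(3) by auto
  have "kernel_flow \<nu> Q X B = kernel_flow \<nu> Q B X" if "X \<in> G" for X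
    using kernel_flow_sym_generator[OF assms(1,2) G G_sets[OF that] eq[OF _ that] B] by simp
  then show "kernel_flow \<nu> Q A B = kernel_flow \<nu> Q B A"
    by (rule kernel_flow_sym_generator[OF assms(1,2) G B _ A])
qed

lemma prob_kernelD:
  assumes "q \<in> M \<rightarrow>\<^sub>M prob_algebra N" "x \<in> space M"
  shows "prob_space (q x)" "sets (q x) = sets N"
  using measurable_space[OF assms] by (auto simp: space_prob_algebra)

lemma emeasure_PiM_PiE:
  assumes "finite I" "\<And>i. i \<in> I \<Longrightarrow> prob_space (M i)" "\<And>i. i \<in> I \<Longrightarrow> A i \<in> sets (M i)"
  shows "emeasure (PiM I M) (PiE I A) = (\<Prod>i\<in>I. emeasure (M i) (A i))"
proof -
  have "prod_emb I M I (PiE I A) = PiE I A"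
    using assms(3) sets.sets_into_space by (intro prod_emb_PiE_same_index) auto
  then show ?thesis
    using emeasure_PiM_emb[of I M I A] assms by simp
qed

lemma indicator_PiE_eq_prod:
  assumes "finite I" "\<theta> \<in> extensional I"
  shows "indicator (PiE I Y) \<theta> = (\<Prod>k\<in>I. indicator (Y k) (\<theta> k) :: ennreal)"
  using assms by (auto simp: indicator_def PiE_iff prod_zero)

lemma measurable_PiM_kernel:
  assumes I: "finite I" and q: "\<And>k. k \<in> I \<Longrightarrow> q k \<in> M k \<rightarrow>\<^sub>M prob_algebra (N k)"
  shows "(\<lambda>\<theta>. PiM I (\<lambda>k. q k (\<theta> k))) \<in> PiM I M \<rightarrow>\<^sub>M prob_algebra (PiM I N)"
proof (rule measurable_prob_algebra_generated[OF sets_PiM Int_stable_prod_algebra prod_algebra_sets_into_space])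
  fix \<theta> assume "\<theta> \<in> space (PiM I M)"
  then have q_\<theta>: "prob_space (q k (\<theta> k))" "sets (q k (\<theta> k)) = sets (N k)" if "k \<in> I" for k
    using prob_kernelD[OF q[OF that]] that by (auto simp: space_PiM)
  show "prob_space (PiM I (\<lambda>k. q k (\<theta> k)))"
    using q_\<theta> by (intro prob_space_PiM)
  show "sets (PiM I (\<lambda>k. q k (\<theta> k))) = sets (PiM I N)"
    using q_\<theta> by (intro sets_PiM_cong) auto
next
  fix A assume "A \<in> prod_algebra I N"
  then obtain E where A: "A = PiE I E" and E: "E \<in> (\<Pi> i\<in>I. sets (N i))"
    by (rule prod_algebraE_all)
  have "(\<lambda>\<theta>. \<Prod>k\<in>I. emeasure (q k (\<theta> k)) (E k)) \<in> borel_measurable (PiM I M)"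
    using E measurable_emeasure_kernel[OF measurable_prob_algebraD[OF q]]
    by (intro borel_measurable_prod_ennreal measurable_compose[OF measurable_component_singleton]) auto
  moreover have "emeasure (PiM I (\<lambda>k. q k (\<theta> k))) A = (\<Prod>k\<in>I. emeasure (q k (\<theta> k)) (E k))"
    if "\<theta> \<in> space (PiM I M)" for \<theta>
    using prob_kernelD[OF q] that E unfolding A by (intro emeasure_PiM_PiE[OF I]) (auto simp: space_PiM PiE_iff)
  ultimately show "(\<lambda>\<theta>. emeasure (PiM I (\<lambda>k. q k (\<theta> k))) A) \<in> borel_measurable (PiM I M)"
    by (simp cong: measurable_cong)
qed

lemma kernel_flow_PiM_PiE:
  assumes I: "finite I" and \<mu>: "sigma_finite_measure \<mu>"
    and d: "\<And>k. k \<in> I \<Longrightarrow> d k \<in> borel_measurable \<mu>"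
    and q: "\<And>k. k \<in> I \<Longrightarrow> q k \<in> \<mu> \<rightarrow>\<^sub>M prob_algebra \<mu>"
    and X: "\<And>k. k \<in> I \<Longrightarrow> X k \<in> sets \<mu>" and Y: "\<And>k. k \<in> I \<Longrightarrow> Y k \<in> sets \<mu>"
  shows "kernel_flow (density (PiM I (\<lambda>_. \<mu>)) (\<lambda>\<theta>. \<Prod>k\<in>I. d k (\<theta> k)))
           (\<lambda>\<theta>. PiM I (\<lambda>k. q k (\<theta> k))) (PiE I Y) (PiE I X)
       = (\<Prod>k\<in>I. kernel_flow (density \<mu> (d k)) (q k) (Y k) (X k))"
proof -
  interpret product_sigma_finite "\<lambda>_. \<mu>"
    using \<mu> by (simp add: product_sigma_finite_def)
  let ?P = "PiM I (\<lambda>_. \<mu>)"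
  have [measurable]: "PiE I X \<in> sets ?P" "PiE I Y \<in> sets ?P"
    using X Y by (auto intro!: sets_PiM_I_finite[OF I])
  have [measurable]: "(\<lambda>x. emeasure (q k x) (X k)) \<in> borel_measurable \<mu>" if "k \<in> I" for k
    using measurable_emeasure_kernel[OF measurable_prob_algebraD[OF q] X] that by simp
  have [measurable]: "(\<lambda>\<theta>. d k (\<theta> k)) \<in> borel_measurable ?P" if "k \<in> I" for k
    using measurable_compose[OF measurable_component_singleton[OF that] d[OF that]] .
  have "kernel_flow (density ?P (\<lambda>\<theta>. \<Prod>k\<in>I. d k (\<theta> k))) (\<lambda>\<theta>. PiM I (\<lambda>k. q k (\<theta> k))) (PiE I Y) (PiE I X)
      = (\<integral>\<^sup>+\<theta>. (\<Prod>k\<in>I. d k (\<theta> k)) * (emeasure (PiM I (\<lambda>k. q k (\<theta> k))) (PiE I X) * indicator (PiE I Y) \<theta>) \<partial>?P)"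
    unfolding kernel_flow_def
    using measurable_emeasure_kernel[OF measurable_prob_algebraD[OF measurable_PiM_kernel[OF I q]]]
    by (intro nn_integral_density borel_measurable_prod_ennreal) auto
  also have "\<dots> = (\<integral>\<^sup>+\<theta>. (\<Prod>k\<in>I. d k (\<theta> k) * (emeasure (q k (\<theta> k)) (X k) * indicator (Y k) (\<theta> k))) \<partial>?P)"
  proof (rule nn_integral_cong)
    fix \<theta> assume \<theta>: "\<theta> \<in> space ?P"
    have "emeasure (PiM I (\<lambda>k. q k (\<theta> k))) (PiE I X) = (\<Prod>k\<in>I. emeasure (q k (\<theta> k)) (X k))"
      using prob_kernelD[OF q] \<theta> X by (intro emeasure_PiM_PiE[OF I]) (auto simp: space_PiM PiE_iff)
    then show "(\<Prod>k\<in>I. d k (\<theta> k)) * (emeasure (PiM I (\<lambda>k. q k (\<theta> k))) (PiE I X) * indicator (PiE I Y) \<theta>)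
        = (\<Prod>k\<in>I. d k (\<theta> k) * (emeasure (q k (\<theta> k)) (X k) * indicator (Y k) (\<theta> k)))"
      using \<theta> by (simp add: indicator_PiE_eq_prod[OF I] space_PiM PiE_iff prod.distrib)
  qed
  also have "\<dots> = (\<Prod>k\<in>I. \<integral>\<^sup>+x. d k x * (emeasure (q k x) (X k) * indicator (Y k) x) \<partial>\<mu>)"
    using d Y by (intro product_nn_integral_prod[OF I]) auto
  also have "\<dots> = (\<Prod>k\<in>I. kernel_flow (density \<mu> (d k)) (q k) (Y k) (X k))"
    using d Y unfolding kernel_flow_def by (intro prod.cong refl) (simp add: nn_integral_density)
  finally show ?thesis .
qed

lemma reversible_PiM_density:
  assumes I: "finite I" and \<mu>: "sigma_finite_measure \<mu>"
    and d: "\<And>k. k \<in> I \<Longrightarrow> d k \<in> borel_measurable \<mu>" "\<And>k. k \<in> I \<Longrightarrow> integral\<^sup>N \<mu> (d k) \<noteq> \<infinity>"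
    and q: "\<And>k. k \<in> I \<Longrightarrow> q k \<in> \<mu> \<rightarrow>\<^sub>M prob_algebra \<mu>"
    and rev: "\<And>k. k \<in> I \<Longrightarrow> reversible (density \<mu> (d k)) (q k)"
  shows "reversible (density (PiM I (\<lambda>_. \<mu>)) (\<lambda>\<theta>. \<Prod>k\<in>I. d k (\<theta> k))) (\<lambda>\<theta>. PiM I (\<lambda>k. q k (\<theta> k)))"
proof -
  interpret product_sigma_finite "\<lambda>_. \<mu>"
    using \<mu> by (simp add: product_sigma_finite_def)
  let ?P = "PiM I (\<lambda>_. \<mu>)"
  let ?\<nu> = "density ?P (\<lambda>\<theta>. \<Prod>k\<in>I. d k (\<theta> k))"
  have space_\<nu>: "space ?\<nu> = PiE I (\<lambda>_. space \<mu>)"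
    by (simp add: space_PiM)
  show ?thesis
  proof (rule reversibleI_generator[where G = "prod_algebra I (\<lambda>_. \<mu>)"])
    have [measurable]: "(\<lambda>\<theta>. d k (\<theta> k)) \<in> borel_measurable ?P" if "k \<in> I" for k
      using measurable_compose[OF measurable_component_singleton[OF that] d(1)[OF that]] .
    have "emeasure ?\<nu> (space ?\<nu>) = (\<integral>\<^sup>+\<theta>. (\<Prod>k\<in>I. d k (\<theta> k)) \<partial>?P)"
      by (subst emeasure_density) (measurable, auto intro!: nn_integral_cong)
    also have "\<dots> = (\<Prod>k\<in>I. integral\<^sup>N \<mu> (d k))"
      using d(1) by (rule product_nn_integral_prod[OF I])
    finally show "finite_measure ?\<nu>"
      using d(2) by (intro finite_measureI) (simp add: ennreal_prod_eq_top)
    show "(\<lambda>\<theta>. PiM I (\<lambda>k. q k (\<theta> k))) \<in> ?\<nu> \<rightarrow>\<^sub>M subprob_algebra ?\<nu>"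
      using measurable_prob_algebraD[OF measurable_PiM_kernel[OF I q]]
      by (subst measurable_cong_sets[OF sets_density arg_cong[OF subprob_algebra_cong[OF sets_density]]])
    show "Int_stable (prod_algebra I (\<lambda>_. \<mu>))"
      by (rule Int_stable_prod_algebra)
    show "prod_algebra I (\<lambda>_. \<mu>) \<subseteq> Pow (space ?\<nu>)"
      using prod_algebra_sets_into_space space_\<nu> by simp
    show "sets ?\<nu> = sigma_sets (space ?\<nu>) (prod_algebra I (\<lambda>_. \<mu>))"
      using space_\<nu> by (simp add: sets_PiM)
    show "space ?\<nu> \<in> prod_algebra I (\<lambda>_. \<mu>)"
      unfolding space_\<nu> by (rule prod_algebraI_finite[OF I]) simp
  next
    fix A B assume "A \<in> prod_algebra I (\<lambda>_. \<mu>)" "B \<in> prod_algebra I (\<lambda>_. \<mu>)"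
    then obtain X Y where A: "A = PiE I X" and X: "\<And>k. k \<in> I \<Longrightarrow> X k \<in> sets \<mu>"
      and B: "B = PiE I Y" and Y: "\<And>k. k \<in> I \<Longrightarrow> Y k \<in> sets \<mu>"
      by (elim prod_algebraE_all) auto
    have "kernel_flow (density \<mu> (d k)) (q k) (X k) (Y k) = kernel_flow (density \<mu> (d k)) (q k) (Y k) (X k)"
      if "k \<in> I" for k
      using rev[OF that] X[OF that] Y[OF that] by (simp add: reversible_iff_kernel_flow)
    then show "kernel_flow ?\<nu> (\<lambda>\<theta>. PiM I (\<lambda>k. q k (\<theta> k))) A B = kernel_flow ?\<nu> (\<lambda>\<theta>. PiM I (\<lambda>k. q k (\<theta> k))) B A"
      using kernel_flow_PiM_PiE[OF I \<mu> d(1) q X Y] kernel_flow_PiM_PiE[OF I \<mu> d(1) q Y X]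
      unfolding A B by (auto intro: prod.cong)
  qed
qed

lemma emeasure_measure_of_weighted_sum:
  fixes c :: "'s \<Rightarrow> ennreal"
  assumes N: "\<And>s. s \<in> S \<Longrightarrow> sets (N s) = sets M" and A: "A \<in> sets M"
  shows "emeasure (measure_of (space M) (sets M) (\<lambda>A. \<Sum>s\<in>S. c s * emeasure (N s) A)) A
       = (\<Sum>s\<in>S. c s * emeasure (N s) A)"
proof (rule emeasure_measure_of_sigma[OF sets.sigma_algebra_axioms _ _ A])
  show "positive (sets M) (\<lambda>A. \<Sum>s\<in>S. c s * emeasure (N s) A)"
    by (simp add: positive_def)
  show "countably_additive (sets M) (\<lambda>A. \<Sum>s\<in>S. c s * emeasure (N s) A)"
  proof (rule countably_additiveI)
    fix F :: "nat \<Rightarrow> _" assume F: "range F \<subseteq> sets M" "disjoint_family F"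
    have "(\<Sum>i. \<Sum>s\<in>S. c s * emeasure (N s) (F i)) = (\<Sum>s\<in>S. \<Sum>i. c s * emeasure (N s) (F i))"
      by (rule suminf_sum) (rule summableI)
    also have "\<dots> = (\<Sum>s\<in>S. c s * emeasure (N s) (\<Union>i. F i))"
      using F N by (intro sum.cong refl) (simp add: suminf_emeasure)
    finally show "(\<Sum>i. \<Sum>s\<in>S. c s * emeasure (N s) (F i)) = (\<Sum>s\<in>S. c s * emeasure (N s) (\<Union>i. F i))" .
  qed
qed

lemma sum_mult_divide_sum:
  fixes a :: "'s \<Rightarrow> real"
  assumes "finite S" "\<And>t. t \<in> S \<Longrightarrow> 0 \<le> a t" "s \<in> S"
  shows "(\<Sum>t\<in>S. a t) * (a s / (\<Sum>t\<in>S. a t)) = a s"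
  using sum_nonneg_eq_0_iff[OF assms(1,2)] assms(3) by fastforce

lemma kernel_flow_mixture:
  fixes f :: "'s \<Rightarrow> 'b \<Rightarrow> real"
  assumes S: "finite S" and c: "0 \<le> c"
    and f: "\<And>s. s \<in> S \<Longrightarrow> f s \<in> borel_measurable M" "\<And>s \<theta>. s \<in> S \<Longrightarrow> 0 \<le> f s \<theta>"
    and Q: "\<And>s. s \<in> S \<Longrightarrow> Q s \<in> M \<rightarrow>\<^sub>M subprob_algebra M"
    and W: "\<And>\<theta> A. \<theta> \<in> space M \<Longrightarrow> A \<in> sets M \<Longrightarrow>
              emeasure (W \<theta>) A = (\<Sum>s\<in>S. ennreal (f s \<theta> / (\<Sum>t\<in>S. f t \<theta>)) * emeasure (Q s \<theta>) A)"
    and A: "A \<in> sets M" and B: "B \<in> sets M"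
  shows "kernel_flow (density M (\<lambda>\<theta>. ennreal (c * (\<Sum>s\<in>S. f s \<theta>)))) W A B
       = (\<Sum>s\<in>S. ennreal c * kernel_flow (density M (\<lambda>\<theta>. ennreal (f s \<theta>))) (Q s) A B)"
proof -
  have weight: "ennreal (c * (\<Sum>t\<in>S. f t \<theta>)) * ennreal (f s \<theta> / (\<Sum>t\<in>S. f t \<theta>)) = ennreal c * ennreal (f s \<theta>)"
    if "s \<in> S" for s \<theta>
  proof -
    have "ennreal (c * (\<Sum>t\<in>S. f t \<theta>)) * ennreal (f s \<theta> / (\<Sum>t\<in>S. f t \<theta>))
        = ennreal (c * ((\<Sum>t\<in>S. f t \<theta>) * (f s \<theta> / (\<Sum>t\<in>S. f t \<theta>))))"
      using c f(2) by (simp add: ennreal_mult'[symmetric] sum_nonneg mult.assoc)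
    also have "\<dots> = ennreal (c * f s \<theta>)"
      using sum_mult_divide_sum[of S "\<lambda>t. f t \<theta>" s] S f(2) that by simp
    also have "\<dots> = ennreal c * ennreal (f s \<theta>)"
      using c by (rule ennreal_mult')
    finally show ?thesis .
  qed
  have QB: "(\<lambda>\<theta>. emeasure (Q s \<theta>) B) \<in> borel_measurable M" if "s \<in> S" for s
    using measurable_emeasure_kernel[OF Q[OF that] B] .
  have "(\<lambda>\<theta>. \<Sum>s\<in>S. ennreal (f s \<theta> / (\<Sum>t\<in>S. f t \<theta>)) * emeasure (Q s \<theta>) B) \<in> borel_measurable M"
    using f(1) QB by measurable
  then have WB: "(\<lambda>\<theta>. emeasure (W \<theta>) B) \<in> borel_measurable M"
    using W[OF _ B] by (simp cong: measurable_cong)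
  have integrand: "(\<lambda>\<theta>. ennreal (f s \<theta>) * (emeasure (Q s \<theta>) B * indicator A \<theta>)) \<in> borel_measurable M"
    if "s \<in> S" for s
    using measurable_compose[OF f(1)[OF that] measurable_ennreal] QB[OF that] borel_measurable_indicator[OF A]
    by (intro borel_measurable_times_ennreal)
  have "kernel_flow (density M (\<lambda>\<theta>. ennreal (c * (\<Sum>s\<in>S. f s \<theta>)))) W A B
      = (\<integral>\<^sup>+\<theta>. ennreal (c * (\<Sum>s\<in>S. f s \<theta>)) * (emeasure (W \<theta>) B * indicator A \<theta>) \<partial>M)"
    unfolding kernel_flow_def using f(1) borel_measurable_indicator[OF A]
    by (intro nn_integral_density borel_measurable_times_ennreal WB) measurable
  also have "\<dots> = (\<integral>\<^sup>+\<theta>. (\<Sum>s\<in>S. ennreal c * (ennreal (f s \<theta>) * (emeasure (Q s \<theta>) B * indicator A \<theta>))) \<partial>M)"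
  proof (rule nn_integral_cong)
    fix \<theta> assume \<theta>: "\<theta> \<in> space M"
    have "ennreal (c * (\<Sum>s\<in>S. f s \<theta>)) * (emeasure (W \<theta>) B * indicator A \<theta>)
        = (\<Sum>s\<in>S. (ennreal (c * (\<Sum>t\<in>S. f t \<theta>)) * ennreal (f s \<theta> / (\<Sum>t\<in>S. f t \<theta>))) * (emeasure (Q s \<theta>) B * indicator A \<theta>))"
      unfolding W[OF \<theta> B] by (simp only: sum_distrib_left sum_distrib_right mult.assoc)
    then show "ennreal (c * (\<Sum>s\<in>S. f s \<theta>)) * (emeasure (W \<theta>) B * indicator A \<theta>)
        = (\<Sum>s\<in>S. ennreal c * (ennreal (f s \<theta>) * (emeasure (Q s \<theta>) B * indicator A \<theta>)))"
      by (simp add: weight mult.assoc cong: sum.cong)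
  qed
  also have "\<dots> = (\<Sum>s\<in>S. ennreal c * (\<integral>\<^sup>+\<theta>. ennreal (f s \<theta>) * (emeasure (Q s \<theta>) B * indicator A \<theta>) \<partial>M))"
    by (subst nn_integral_sum) (auto intro!: sum.cong nn_integral_cmult borel_measurable_times_ennreal integrand)
  also have "\<dots> = (\<Sum>s\<in>S. ennreal c * kernel_flow (density M (\<lambda>\<theta>. ennreal (f s \<theta>))) (Q s) A B)"
    unfolding kernel_flow_def using f(1) QB borel_measurable_indicator[OF A]
    by (intro sum.cong refl arg_cong[where f="(*) _"] nn_integral_density[symmetric])
       (auto intro: borel_measurable_times_ennreal)
  finally show ?thesis .
qed

lemma reversible_mixture:
  fixes f :: "'s \<Rightarrow> 'b \<Rightarrow> real"
  assumes S: "finite S" and c: "0 \<le> c"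
    and f: "\<And>s. s \<in> S \<Longrightarrow> f s \<in> borel_measurable M" "\<And>s \<theta>. s \<in> S \<Longrightarrow> 0 \<le> f s \<theta>"
    and Q: "\<And>s. s \<in> S \<Longrightarrow> Q s \<in> M \<rightarrow>\<^sub>M subprob_algebra M"
    and rev: "\<And>s. s \<in> S \<Longrightarrow> reversible (density M (\<lambda>\<theta>. ennreal (f s \<theta>))) (Q s)"
    and W: "\<And>\<theta> A. \<theta> \<in> space M \<Longrightarrow> A \<in> sets M \<Longrightarrow>
              emeasure (W \<theta>) A = (\<Sum>s\<in>S. ennreal (f s \<theta> / (\<Sum>t\<in>S. f t \<theta>)) * emeasure (Q s \<theta>) A)"
  shows "reversible (density M (\<lambda>\<theta>. ennreal (c * (\<Sum>s\<in>S. f s \<theta>)))) W"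
  unfolding reversible_iff_kernel_flow
proof (intro ballI)
  fix A B assume "A \<in> sets (density M (\<lambda>\<theta>. ennreal (c * (\<Sum>s\<in>S. f s \<theta>))))"
    "B \<in> sets (density M (\<lambda>\<theta>. ennreal (c * (\<Sum>s\<in>S. f s \<theta>))))"
  then have A: "A \<in> sets M" and B: "B \<in> sets M"
    by simp_all
  have "kernel_flow (density M (\<lambda>\<theta>. ennreal (f s \<theta>))) (Q s) A B
      = kernel_flow (density M (\<lambda>\<theta>. ennreal (f s \<theta>))) (Q s) B A" if "s \<in> S" for s
    using rev[OF that] A B by (simp add: reversible_iff_kernel_flow)
  then show "kernel_flow (density M (\<lambda>\<theta>. ennreal (c * (\<Sum>s\<in>S. f s \<theta>)))) W A B
      = kernel_flow (density M (\<lambda>\<theta>. ennreal (c * (\<Sum>s\<in>S. f s \<theta>)))) W B A"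
    by (simp add: kernel_flow_mixture[OF S c f Q W A B] kernel_flow_mixture[OF S c f Q W B A])
qed

lemma tdens_nonneg: "0 \<le> tdens \<mu>pr \<Phi> T \<theta>"
  unfolding tdens_def Zc_def by (intro divide_nonneg_nonneg integral_nonneg_AE AE_I2) auto

lemma borel_measurable_tdens:
  assumes [measurable]: "\<Phi> \<in> borel_measurable M"
  shows "tdens \<mu>pr \<Phi> T \<in> borel_measurable M"
  unfolding tdens_def[abs_def] by measurable

text \<open>No integrability hypothesis is needed: if the unnormalised density is not integrable,
  then the junk value of its integral is 0 and so is the density.\<close>
lemma nn_integral_tdens_finite: "(\<integral>\<^sup>+\<theta>. ennreal (tdens \<mu>pr \<Phi> T \<theta>) \<partial>\<mu>pr) \<noteq> \<infinity>"
proof -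
  have "integrable \<mu>pr (tdens \<mu>pr \<Phi> T)"
  proof (cases "integrable \<mu>pr (\<lambda>\<theta>. exp (- \<Phi> \<theta> * inv_temp T))")
    case True
    then show ?thesis unfolding tdens_def[abs_def] by (rule integrable_divide_zero)
  next
    case False
    then have "Zc \<mu>pr \<Phi> T = 0" unfolding Zc_def by (rule not_integrable_integral_eq)
    then show ?thesis unfolding tdens_def[abs_def] by simp
  qed
  then have "(\<integral>\<^sup>+\<theta>. ennreal (tdens \<mu>pr \<Phi> T \<theta>) \<partial>\<mu>pr) = ennreal (\<integral>\<theta>. tdens \<mu>pr \<Phi> T \<theta> \<partial>\<mu>pr)"
    by (rule nn_integral_eq_integral) (simp add: tdens_nonneg)
  then show ?thesis
    by simp
qed

lemma markov_kernel_prob_algebra: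
  assumes "sets \<mu> = sets borel" "markov_kernel borel p"
  shows "p \<in> \<mu> \<rightarrow>\<^sub>M prob_algebra \<mu>"
proof -
  have "prob_algebra \<mu> = prob_algebra borel"
    unfolding prob_algebra_def using subprob_algebra_cong[OF assms(1)] by simp
  then show ?thesis
    using assms unfolding markov_kernel_def by (subst measurable_cong_sets[OF assms(1) refl]) simp
qed

lemma reversible_swap_kernel:
  assumes \<mu>: "sigma_finite_measure \<mu>" and \<sigma>: "\<And>k. k \<in> {1..K} \<Longrightarrow> \<sigma> k \<in> {1..K}"
    and \<pi>: "\<And>j. j \<in> {1..K} \<Longrightarrow> \<pi> j \<in> borel_measurable \<mu>" "\<And>j \<theta>. j \<in> {1..K} \<Longrightarrow> 0 \<le> \<pi> j \<theta>"
      "\<And>j. j \<in> {1..K} \<Longrightarrow> (\<integral>\<^sup>+\<theta>. ennreal (\<pi> j \<theta>) \<partial>\<mu>) \<noteq> \<infinity>"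
    and p: "\<And>j. j \<in> {1..K} \<Longrightarrow> p j \<in> \<mu> \<rightarrow>\<^sub>M prob_algebra \<mu>"
      "\<And>j. j \<in> {1..K} \<Longrightarrow> reversible (density \<mu> (\<lambda>\<theta>. ennreal (\<pi> j \<theta>))) (p j)"
  shows "reversible (density (PiM {1..K} (\<lambda>_. \<mu>)) (\<lambda>\<theta>. ennreal (swap_dens K \<pi> \<sigma> \<theta>))) (swap_kernel K p \<sigma>)"
proof -
  have "(\<lambda>\<theta>. ennreal (swap_dens K \<pi> \<sigma> \<theta>)) = (\<lambda>\<theta>. \<Prod>k\<in>{1..K}. ennreal (\<pi> (\<sigma> k) (\<theta> k)))"
    unfolding swap_dens_def using \<sigma> \<pi>(2) by (intro ext prod_ennreal[symmetric]) auto
  moreover have "swap_kernel K p \<sigma> = (\<lambda>\<theta>. PiM {1..K} (\<lambda>k. p (\<sigma> k) (\<theta> k)))"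
    unfolding swap_kernel_def ..
  ultimately show ?thesis
    using \<sigma> \<pi> p by (auto intro!: reversible_PiM_density[OF finite_atLeastAtMost \<mu>])
qed

lemma emeasure_wgpt_kernel:
  fixes p :: "nat \<Rightarrow> 'a::topological_space \<Rightarrow> 'a measure"
  assumes S: "\<And>\<sigma> k. \<sigma> \<in> S \<Longrightarrow> k \<in> {1..K} \<Longrightarrow> \<sigma> k \<in> {1..K}"
    and p: "\<And>j. j \<in> {1..K} \<Longrightarrow> p j \<in> borel \<rightarrow>\<^sub>M prob_algebra borel"
    and \<theta>: "\<theta> \<in> space (PiM {1..K} (\<lambda>_. borel))" and A: "A \<in> sets (PiM {1..K} (\<lambda>_. borel))"
  shows "emeasure (wgpt_kernel K S \<pi> p \<theta>) A
       = (\<Sum>\<sigma>\<in>S. ennreal (swap_weight K S \<pi> \<sigma> \<theta>) * emeasure (swap_kernel K p \<sigma> \<theta>) A)"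
  unfolding wgpt_kernel_def
proof (rule emeasure_measure_of_weighted_sum[OF _ A])
  fix \<sigma> assume "\<sigma> \<in> S"
  then show "sets (swap_kernel K p \<sigma> \<theta>) = sets (PiM {1..K} (\<lambda>_. borel))"
    using prob_kernelD(2)[OF measurable_PiM_kernel[of "{1..K}" "\<lambda>k. p (\<sigma> k)"] \<theta>] S p
    unfolding swap_kernel_def by auto
qed

lemma reversible_wgpt_kernel:
  fixes \<mu> :: "'a::topological_space measure"
  assumes \<mu>: "sigma_finite_measure \<mu>" "sets \<mu> = sets borel"
    and S: "finite S" "\<And>\<sigma> k. \<sigma> \<in> S \<Longrightarrow> k \<in> {1..K} \<Longrightarrow> \<sigma> k \<in> {1..K}"
    and \<pi>: "\<And>j. j \<in> {1..K} \<Longrightarrow> \<pi> j \<in> borel_measurable \<mu>" "\<And>j \<theta>. j \<in> {1..K} \<Longrightarrow> 0 \<le> \<pi> j \<theta>"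
      "\<And>j. j \<in> {1..K} \<Longrightarrow> (\<integral>\<^sup>+\<theta>. ennreal (\<pi> j \<theta>) \<partial>\<mu>) \<noteq> \<infinity>"
    and p: "\<And>j. j \<in> {1..K} \<Longrightarrow> markov_kernel borel (p j)"
      "\<And>j. j \<in> {1..K} \<Longrightarrow> reversible (density \<mu> (\<lambda>\<theta>. ennreal (\<pi> j \<theta>))) (p j)"
  shows "reversible (mu_W K S \<mu> \<pi>) (wgpt_kernel K S \<pi> p)"
  unfolding mu_W_def
proof (rule reversible_mixture[OF S(1)])
  let ?P = "PiM {1..K} (\<lambda>_. \<mu>)"
  fix \<sigma> assume \<sigma>: "\<sigma> \<in> S"
  show "reversible (density ?P (\<lambda>\<theta>. ennreal (swap_dens K \<pi> \<sigma> \<theta>))) (swap_kernel K p \<sigma>)"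
    using \<mu> S(2)[OF \<sigma>] \<pi> p by (intro reversible_swap_kernel markov_kernel_prob_algebra) auto
  show "swap_kernel K p \<sigma> \<in> ?P \<rightarrow>\<^sub>M subprob_algebra ?P"
    unfolding swap_kernel_def using \<mu>(2) S(2)[OF \<sigma>] p(1)
    by (intro measurable_prob_algebraD measurable_PiM_kernel finite_atLeastAtMost markov_kernel_prob_algebra) auto
  have "(\<lambda>\<theta>. \<pi> (\<sigma> k) (\<theta> k)) \<in> borel_measurable ?P" if "k \<in> {1..K}" for k
    using measurable_compose[OF measurable_component_singleton[OF that] \<pi>(1)[OF S(2)[OF \<sigma> that]]] .
  then show "swap_dens K \<pi> \<sigma> \<in> borel_measurable ?P"
    unfolding swap_dens_def[abs_def] by (rule borel_measurable_prod)
  show "0 \<le> swap_dens K \<pi> \<sigma> \<theta>" for \<theta>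
    unfolding swap_dens_def using S(2)[OF \<sigma>] \<pi>(2) by (intro prod_nonneg) auto
next
  fix \<theta> A assume "\<theta> \<in> space (PiM {1..K} (\<lambda>_. \<mu>))" "A \<in> sets (PiM {1..K} (\<lambda>_. \<mu>))"
  moreover have "sets (PiM {1..K} (\<lambda>_. \<mu>)) = sets (PiM {1..K} (\<lambda>_. borel))"
    using \<mu>(2) by (intro sets_PiM_cong) auto
  ultimately have "\<theta> \<in> space (PiM {1..K} (\<lambda>_. borel))" "A \<in> sets (PiM {1..K} (\<lambda>_. borel))"
    using sets_eq_imp_space_eq by auto
  then show "emeasure (wgpt_kernel K S \<pi> p \<theta>) A
      = (\<Sum>\<sigma>\<in>S. ennreal (swap_dens K \<pi> \<sigma> \<theta> / (\<Sum>\<tau>\<in>S. swap_dens K \<pi> \<tau> \<theta>)) * emeasure (swap_kernel K p \<sigma> \<theta>) A)"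
    unfolding swap_weight_def[symmetric] using S(2) p(1) unfolding markov_kernel_def
    by (intro emeasure_wgpt_kernel)
qed simp

theorem proposition4:
  fixes \<mu>pr :: "'a::{banach, second_countable_topology} measure"
    and \<Phi> :: "'a \<Rightarrow> real"
    and K :: nat
    and T :: "nat \<Rightarrow> ereal"
    and S :: "(nat \<Rightarrow> nat) set"
    and p :: "nat \<Rightarrow> 'a \<Rightarrow> 'a measure"
  assumes prior: "prob_space \<mu>pr" "sets \<mu>pr = sets borel"
    and Phi_meas: "\<Phi> \<in> borel_measurable borel"
    and Z_finite: "integrable \<mu>pr (\<lambda>\<theta>. exp (- \<Phi> \<theta>))"
    and K: "K \<ge> 1"
    and T1: "T 1 = 1"
    and Tmono: "\<And>i j. 1 \<le> i \<Longrightarrow> i < j \<Longrightarrow> j \<le> K \<Longrightarrow> T i < T j"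
    and S_perm: "\<And>\<sigma>. \<sigma> \<in> S \<Longrightarrow> \<sigma> permutes {1..K}"
    and S_inv: "\<And>\<sigma>. \<sigma> \<in> S \<Longrightarrow> inv \<sigma> \<in> S"
    and S_ne: "S \<noteq> {}"
    and kern: "\<And>k. k \<in> {1..K} \<Longrightarrow> markov_kernel borel (p k)"
    and rev: "\<And>k. k \<in> {1..K} \<Longrightarrow> reversible (tmeasure \<mu>pr \<Phi> (T k)) (p k)"
  shows "reversible (mu_W K S \<mu>pr (\<lambda>k. tdens \<mu>pr \<Phi> (T k)))
                    (wgpt_kernel K S (\<lambda>k. tdens \<mu>pr \<Phi> (T k)) p)"
proof (rule reversible_wgpt_kernel)
  show "sigma_finite_measure \<mu>pr"
    using prior(1) by (rule prob_space_imp_sigma_finite)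
  show "finite S"
    using S_perm by (intro finite_subset[OF _ finite_permutations[of "{1..K}"]]) auto
  show "\<sigma> k \<in> {1..K}" if "\<sigma> \<in> S" "k \<in> {1..K}" for \<sigma> k
    using permutes_in_image[OF S_perm[OF that(1)]] that(2) by simp
  have "\<Phi> \<in> borel_measurable \<mu>pr"
    using Phi_meas by (subst measurable_cong_sets[OF prior(2) refl])
  then show "tdens \<mu>pr \<Phi> (T j) \<in> borel_measurable \<mu>pr" for j
    by (rule borel_measurable_tdens)
  show "(\<integral>\<^sup>+\<theta>. ennreal (tdens \<mu>pr \<Phi> (T j) \<theta>) \<partial>\<mu>pr) \<noteq> \<infinity>" for j
    by (rule nn_integral_tdens_finite)
  show "reversible (density \<mu>pr (\<lambda>\<theta>. ennreal (tdens \<mu>pr \<Phi> (T j) \<theta>))) (p j)" if "j \<in> {1..K}" for j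
    using rev[OF that] unfolding tmeasure_def .
qed (use prior(2) kern tdens_nonneg in auto)

end
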